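(* Let $N+1\ge 10$ and $m=\lfloor (N+1)/10\rfloor$. Let $\rho_1,\dots,\rho_{N+1}$ be a multiset of transfer exponents to a target $\mathcal{D}$ (with common constant $C_\rho$), ordered as $\rho_{(1)}\le\dots\le\rho_{(N+1)}$, and let $P_1,\dots,P_{N+1}$ be distributions such that $P_t$ has transfer exponent $\rho_t$ to $\mathcal{D}$; let $P_{(t)}$ denote the distribution with exponent $\rho_{(t)}$. Draw $i_1,\dots,i_{N+1}$ i.i.d. from $\mathrm{Unif}(\{1,\dots,m\})$ and set $Q_t=P_{(i_t)}$. Then with probability at least $0.97$ there exists a permutation $\pi$ of $[N+1]$ with $i_{\pi(t)}\le t$ for all $t\in[N+1]$; in particular, on this event $Q_{\pi(t)}$ has transfer exponent $\rho_{(t)}$ to $\mathcal{D}$ for every $t$, i.e. some permutation of $Q_1,\dots,Q_{N+1}$ admits the transfer exponents $\rho_{(1)},\dots,\rho_{(N+1)}$.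
   Context: A distribution $P$ has transfer exponent $\rho>0$ to $\mathcal{D}$ with respect to a concept class $\mathcal{H}$ (with constant $C_\rho\ge2$) if $\mathcal{E}_{\mathcal{D}}(h)\le C_\rho(\mathcal{E}_P(h))^{1/\rho}$ for all $h\in\mathcal{H}$, where $\mathcal{E}_P(h)=\mathrm{er}_P(h)-\inf_{h'\in\mathcal{H}}\mathrm{er}_P(h')$ and $\mathrm{er}_P(h)=P\{(x,y):h(x)\ne y\}$. *)

theory Defs
  imports "HOL-Probability.Probability"
begin

definition er :: "('x \<times> 'y) measure \<Rightarrow> ('x \<Rightarrow> 'y) \<Rightarrow> real" where
  "er P h = measure P {(x, y). h x \<noteq> y}"

definition excess_er :: "('x \<Rightarrow> 'y) set \<Rightarrow> ('x \<times> 'y) measure \<Rightarrow> ('x \<Rightarrow> 'y) \<Rightarrow> real" where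
  "excess_er H P h = er P h - (INF h'\<in>H. er P h')"

definition has_transfer_exponent ::
  "('x \<Rightarrow> 'y) set \<Rightarrow> ('x \<times> 'y) measure \<Rightarrow> ('x \<times> 'y) measure \<Rightarrow> real \<Rightarrow> real \<Rightarrow> bool" where
  "has_transfer_exponent H P D \<rho> C \<longleftrightarrow>
     \<rho> > 0 \<and> (\<forall>h\<in>H. excess_er H D h \<le> C * (excess_er H P h) powr (1 / \<rho>))"

end

theory Submission
  imports Defs
begin

text \<open>
  A permutation \<pi> with i (\<pi> t) \<le> t exists as soon as, for every t, at least t of the draws
  are \<le> t: greedily send a draw with the largest label to the last position and recurse.
  For t > m this is automatic, as all draws are \<le> m. For t \<le> m the number of draws \<le> t is binomial with mean
  at least 10 t, so by Markov's inequality applied to 2 ^ (- count), whose expectation is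
  (1 - t / (2 m)) ^ (N + 1) \<le> e ^ (- 5 t), it fails with probability at most 0.03 \<cdot> 2 ^ (- t);
  a union bound over t leaves 0.03. On the good event the exponents \<rho> (\<sigma> (i (\<pi> t))) are
  \<le> \<rho> (\<sigma> t), and raising a transfer exponent only weakens the transfer condition because
  excess errors lie in [0, 1].
\<close>

lemma ex_bij_betw_label_le:
  fixes i :: "'a \<Rightarrow> nat"
  assumes "finite S" "card S = n" "\<forall>t\<in>{1..n}. t \<le> card {s\<in>S. i s \<le> t}"
  shows "\<exists>\<pi>. bij_betw \<pi> {1..n} S \<and> (\<forall>t\<in>{1..n}. i (\<pi> t) \<le> t)"
  using assms
proof (induction n arbitrary: S)
  case 0
  then show ?case by (auto simp: bij_betw_def)
next
  case (Suc n)
  have fin: "finite S" and card: "card S = Suc n"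
    and enough: "\<forall>t\<in>{1..Suc n}. t \<le> card {s\<in>S. i s \<le> t}"
    using Suc.prems by auto
  obtain s0 where s0: "s0 \<in> S" "\<forall>s\<in>S. i s \<le> i s0"
    using fin card Max_in[of "i ` S"] Max_ge[of "i ` S"] by fastforce
  have "{s\<in>S. i s \<le> Suc n} = S"
    using enough card fin by (intro card_seteq) auto
  then have s0_le: "i s0 \<le> Suc n"
    using s0 by blast
  define S' where "S' = S - {s0}"
  have "\<forall>t\<in>{1..n}. t \<le> card {s\<in>S'. i s \<le> t}"
  proof
    fix t assume t: "t \<in> {1..n}"
    show "t \<le> card {s\<in>S'. i s \<le> t}"
    proof (cases "i s0 \<le> t")
      case True
      then have "{s\<in>S'. i s \<le> t} = S'" using s0 by (auto simp: S'_def)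
      then show ?thesis using fin card s0 t by (simp add: S'_def)
    next
      case False
      then have "{s\<in>S'. i s \<le> t} = {s\<in>S. i s \<le> t}" by (auto simp: S'_def)
      then show ?thesis using enough t by auto
    qed
  qed
  then obtain \<pi> where \<pi>: "bij_betw \<pi> {1..n} S'" "\<forall>t\<in>{1..n}. i (\<pi> t) \<le> t"
    using Suc.IH[of S'] fin card s0 by (auto simp: S'_def)
  have "bij_betw (\<pi>(Suc n := s0)) {1..n} S'"
    using \<pi>(1) by (rule bij_betw_cong[THEN iffD1, rotated]) auto
  then have "bij_betw (\<pi>(Suc n := s0)) ({1..n} \<union> {Suc n}) (S' \<union> {s0})"
    by (rule bij_betw_combine) (auto simp: S'_def bij_betw_def)
  moreover have "{1..n} \<union> {Suc n} = {1..Suc n}" "S' \<union> {s0} = S"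
    using s0 by (auto simp: S'_def)
  ultimately have "bij_betw (\<pi>(Suc n := s0)) {1..Suc n} S"
    by simp
  moreover have "\<forall>t\<in>{1..Suc n}. i ((\<pi>(Suc n := s0)) t) \<le> t"
    using \<pi>(2) s0_le by (auto simp: le_Suc_eq)
  ultimately show ?case
    by blast
qed

lemma ex_bij_betw_atLeastAtMost_label_le:
  fixes i :: "nat \<Rightarrow> nat"
  assumes "\<forall>s\<in>{1..n}. i s \<in> {1..m}" "m \<le> n" "\<forall>t\<in>{1..m}. t \<le> card {s\<in>{1..n}. i s \<le> t}"
  shows "\<exists>\<pi>. bij_betw \<pi> {1..n} {1..n} \<and> (\<forall>t\<in>{1..n}. i (\<pi> t) \<le> t)"
proof (rule ex_bij_betw_label_le)
  show "\<forall>t\<in>{1..n}. t \<le> card {s\<in>{1..n}. i s \<le> t}"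
  proof
    fix t assume t: "t \<in> {1..n}"
    show "t \<le> card {s\<in>{1..n}. i s \<le> t}"
    proof (cases "t \<le> m")
      case True
      then show ?thesis
        using assms(3) t by auto
    next
      case False
      then have "{s\<in>{1..n}. i s \<le> t} = {1..n}"
        using assms(1) by fastforce
      then show ?thesis
        using t by simp
    qed
  qed
qed simp_all

lemma excess_er_bounds:
  assumes "prob_space P" "h \<in> H"
  shows "0 \<le> excess_er H P h" "excess_er H P h \<le> 1"
proof -
  have er: "0 \<le> er P g" "er P g \<le> 1" for g
    using prob_space.prob_le_1[OF assms(1)] by (simp_all add: er_def)
  have "(INF g\<in>H. er P g) \<le> er P h"
    using er(1) assms(2) by (intro cINF_lower bdd_belowI[of _ 0]) auto
  moreover have "0 \<le> (INF g\<in>H. er P g)"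
    using er(1) assms(2) by (intro cINF_greatest) auto
  ultimately show "0 \<le> excess_er H P h" "excess_er H P h \<le> 1"
    using er[of h] by (simp_all add: excess_er_def)
qed

lemma has_transfer_exponent_mono:
  assumes "has_transfer_exponent H P D \<rho> C" "prob_space P" "\<rho> \<le> \<rho>'" "0 \<le> C"
  shows "has_transfer_exponent H P D \<rho>' C"
  unfolding has_transfer_exponent_def
proof (intro conjI ballI)
  have \<rho>: "0 < \<rho>"
    using assms(1) by (simp add: has_transfer_exponent_def)
  then show "0 < \<rho>'"
    using assms(3) by simp
  fix h assume h: "h \<in> H"
  have "excess_er H D h \<le> C * excess_er H P h powr (1 / \<rho>)"
    using assms(1) h by (simp add: has_transfer_exponent_def)
  also have "\<dots> \<le> C * excess_er H P h powr (1 / \<rho>')"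
    using excess_er_bounds[OF assms(2) h] \<rho> assms(3,4)
    by (intro mult_left_mono powr_mono') (auto simp: frac_le)
  finally show "excess_er H D h \<le> C * excess_er H P h powr (1 / \<rho>')" .
qed

lemma has_transfer_exponent_sorted:
  assumes "0 \<le> C"
    and "\<forall>t\<in>{1..n}. prob_space (P t)"
    and "\<forall>t\<in>{1..n}. has_transfer_exponent H (P t) D (\<rho> t) C"
    and "bij_betw \<sigma> {1..n} {1..n}"
    and "\<forall>s\<in>{1..n}. \<forall>t\<in>{1..n}. s \<le> t \<longrightarrow> \<rho> (\<sigma> s) \<le> \<rho> (\<sigma> t)"
    and "k \<in> {1..n}" "t \<in> {1..n}" "k \<le> t"
  shows "has_transfer_exponent H (P (\<sigma> k)) D (\<rho> (\<sigma> t)) C"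
proof (rule has_transfer_exponent_mono)
  have "\<sigma> k \<in> {1..n}"
    using assms(4,6) by (rule bij_betw_apply)
  then show "has_transfer_exponent H (P (\<sigma> k)) D (\<rho> (\<sigma> k)) C" "prob_space (P (\<sigma> k))"
    using assms(2,3) by blast+
  show "\<rho> (\<sigma> k) \<le> \<rho> (\<sigma> t)"
    using assms(5-8) by blast
qed (use assms(1) in simp)

lemma expectation_Pi_pmf_power_card_le:
  fixes q :: real and m t :: nat
  assumes "finite I" "1 \<le> m" "t \<le> m" "0 \<le> q"
  shows "measure_pmf.expectation (Pi_pmf I d (\<lambda>_. pmf_of_set {1..m}))
           (\<lambda>i. q ^ card {s\<in>I. i s \<le> t}) = (1 - (1 - q) * t / m) ^ card I"
proof -
  define g where "g v = (if v \<le> t then q else 1)" for v :: nat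
  have "(\<Sum>v\<in>{1..m}. g v) = (\<Sum>v\<in>{1..t}. q) + (\<Sum>v\<in>{t<..m}. 1)"
  proof -
    have "{1..m} = {1..t} \<union> {t<..m}"
      using assms(3) by auto
    then have "(\<Sum>v\<in>{1..m}. g v) = (\<Sum>v\<in>{1..t}. g v) + (\<Sum>v\<in>{t<..m}. g v)"
      by (auto intro: sum.union_disjoint)
    then show ?thesis
      by (simp add: g_def)
  qed
  then have Eg: "measure_pmf.expectation (pmf_of_set {1..m}) g = 1 - (1 - q) * t / m"
    using assms(2,3) by (simp add: integral_pmf_of_set field_simps of_nat_diff)
  have "q ^ card {s\<in>I. i s \<le> t} = (\<Prod>s\<in>I. g (i s))" for i :: "'a \<Rightarrow> nat"
    using assms(1) by (simp add: g_def prod.If_cases Int_def)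
  then have "measure_pmf.expectation (Pi_pmf I d (\<lambda>_. pmf_of_set {1..m}))
               (\<lambda>i. q ^ card {s\<in>I. i s \<le> t})
             = measure_pmf.expectation (Pi_pmf I d (\<lambda>_. pmf_of_set {1..m})) (\<lambda>i. \<Prod>s\<in>I. g (i s))"
    by simp
  also have "\<dots> = (\<Prod>s\<in>I. measure_pmf.expectation (pmf_of_set {1..m}) g)"
    using assms(1,2,4) by (intro expectation_prod_Pi_pmf integrable_measure_pmf_finite) (auto simp: g_def)
  also have "\<dots> = (1 - (1 - q) * t / m) ^ card I"
    by (simp only: Eg prod_constant)
  finally show ?thesis .
qed

lemma prob_Pi_pmf_card_le_less:
  fixes m t :: nat
  assumes "finite I" "1 \<le> t" "t \<le> m"
  shows "measure_pmf.prob (Pi_pmf I d (\<lambda>_. pmf_of_set {1..m})) {i. card {s\<in>I. i s \<le> t} < t}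
           \<le> 2 ^ (t - 1) * (1 - t / (2 * real m)) ^ card I"
proof -
  let ?M = "Pi_pmf I d (\<lambda>_. pmf_of_set {1..m})"
  let ?Z = "\<lambda>i. (1 / 2 :: real) ^ card {s\<in>I. i s \<le> t}"
  have "{i. card {s\<in>I. i s \<le> t} < t} \<subseteq> {i \<in> space ?M. (1 / 2) ^ (t - 1) \<le> ?Z i}"
    by (auto intro: power_decreasing)
  then have "measure_pmf.prob ?M {i. card {s\<in>I. i s \<le> t} < t}
               \<le> measure_pmf.prob ?M {i \<in> space ?M. (1 / 2) ^ (t - 1) \<le> ?Z i}"
    by (rule measure_pmf.finite_measure_mono) simp
  also have "\<dots> \<le> measure_pmf.expectation ?M ?Z / (1 / 2) ^ (t - 1)"
    by (intro integral_Markov_inequality_measure measure_pmf.integrable_const_bound[where B = 1])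
       (auto intro!: AE_I2 power_le_one)
  also have "\<dots> = 2 ^ (t - 1) * (1 - t / (2 * real m)) ^ card I"
    using expectation_Pi_pmf_power_card_le[of I m t "1 / 2" d] assms by (simp add: power_one_over)
  finally show ?thesis .
qed

lemma exp_5_ge_67: "67 \<le> exp (5 :: real)"
proof -
  have "67 \<le> (5 / 4 :: real) ^ 20"
    by (simp add: power_divide)
  also have "\<dots> \<le> exp (1 / 4) ^ 20"
    by (intro power_mono) (use exp_ge_add_one_self[of "1 / 4 :: real"] in auto)
  also have "\<dots> = exp 5"
    by (simp flip: exp_of_nat_mult)
  finally show ?thesis .
qed

lemma chernoff_bound_le_geometric:
  fixes m n t :: nat
  assumes "10 * m \<le> n" "1 \<le> t" "t \<le> m"
  shows "2 ^ (t - 1) * (1 - t / (2 * real m)) ^ n \<le> 0.03 * (1 / 2 :: real) ^ t"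
proof -
  have "(1 - t / (2 * real m)) ^ n \<le> exp (- (t / (2 * real m))) ^ n"
    using assms exp_ge_add_one_self[of "- (t / (2 * real m))"] by (intro power_mono) auto
  also have "\<dots> = exp (- (n * t / (2 * real m)))"
    by (simp flip: exp_of_nat_mult)
  also have "\<dots> \<le> exp (- 5 * t)"
  proof -
    have "10 * real m \<le> n"
      using assms(1) by (metis of_nat_le_iff of_nat_mult of_nat_numeral)
    then have "10 * real m * real t \<le> real n * real t"
      by (rule mult_right_mono) simp
    then show ?thesis
      using assms by (simp add: field_simps)
  qed
  also have "\<dots> = exp (- 5) ^ t"
    by (simp flip: exp_of_nat_mult)
  finally have tail: "(1 - t / (2 * real m)) ^ n \<le> exp (- 5) ^ t" .
  have "(4 * exp (- 5 :: real)) ^ t \<le> (4 * exp (- 5)) ^ 1"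
    using exp_5_ge_67 assms(2) by (intro power_decreasing) (auto simp: exp_minus field_simps)
  also have "\<dots> \<le> 0.06"
    using exp_5_ge_67 by (simp add: exp_minus field_simps)
  finally have small: "(4 * exp (- 5 :: real)) ^ t \<le> 0.06" .
  have four: "(4 :: real) ^ t = 2 ^ t * 2 ^ t"
    by (simp flip: power_mult_distrib)
  have "2 ^ (t - 1) * (1 - t / (2 * real m)) ^ n \<le> 2 ^ (t - 1) * exp (- 5) ^ t"
    using tail by (rule mult_left_mono) simp
  also have "\<dots> \<le> 0.03 * (1 / 2) ^ t"
    using small four assms(2) by (simp add: power_mult_distrib power_one_over field_simps power_diff)
  finally show ?thesis .
qed

lemma prob_Pi_pmf_ex_card_le_less:
  fixes m :: nat
  assumes "finite I" "1 \<le> m" "10 * m \<le> card I"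
  shows "measure_pmf.prob (Pi_pmf I d (\<lambda>_. pmf_of_set {1..m}))
           (\<Union>t\<in>{1..m}. {i. card {s\<in>I. i s \<le> t} < t}) \<le> 0.03"
proof -
  let ?M = "Pi_pmf I d (\<lambda>_. pmf_of_set {1..m})"
  have "measure_pmf.prob ?M (\<Union>t\<in>{1..m}. {i. card {s\<in>I. i s \<le> t} < t})
          \<le> (\<Sum>t\<in>{1..m}. measure_pmf.prob ?M {i. card {s\<in>I. i s \<le> t} < t})"
    by (rule measure_pmf.finite_measure_subadditive_finite) auto
  also have "\<dots> \<le> (\<Sum>t\<in>{1..m}. 0.03 * (1 / 2) ^ t)"
  proof (rule sum_mono)
    fix t assume "t \<in> {1..m}"
    then show "measure_pmf.prob ?M {i. card {s\<in>I. i s \<le> t} < t} \<le> 0.03 * (1 / 2) ^ t"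
      using prob_Pi_pmf_card_le_less[of I t m d] chernoff_bound_le_geometric[of m "card I" t] assms
      by simp
  qed
  also have "\<dots> = 0.03 * (1 - (1 / 2) ^ m)"
    by (induction m) (simp_all add: atLeastAtMostSuc_conv algebra_simps)
  also have "\<dots> \<le> 0.03"
    by simp
  finally show ?thesis .
qed

lemma measure_pmf_prob_ge_if_exceptions_le:
  assumes "measure_pmf.prob M B \<le> 1 - p" "\<And>x. x \<in> set_pmf M \<Longrightarrow> x \<notin> B \<Longrightarrow> x \<in> A"
  shows "p \<le> measure_pmf.prob M A"
proof -
  have "1 - measure_pmf.prob M B = measure_pmf.prob M (UNIV - B)"
    using measure_pmf.prob_compl[of B M] by simp
  also have "\<dots> = measure_pmf.prob M ((UNIV - B) \<inter> set_pmf M)"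
    by (simp add: measure_Int_set_pmf)
  also have "\<dots> \<le> measure_pmf.prob M A"
    using assms(2) by (intro measure_pmf.finite_measure_mono) auto
  finally show ?thesis
    using assms(1) by simp
qed

theorem lemmaD2:
  fixes N m :: nat
    and H :: "('x \<Rightarrow> 'y) set"
    and D :: "('x \<times> 'y) measure"
    and P :: "nat \<Rightarrow> ('x \<times> 'y) measure"
    and \<rho> :: "nat \<Rightarrow> real"
    and C :: real
    and \<sigma> :: "nat \<Rightarrow> nat"
  assumes "N + 1 \<ge> 10"
    and "m = (N + 1) div 10"
    and "C \<ge> 2"
    and "prob_space D"
    and "\<forall>t\<in>{1..N+1}. prob_space (P t)"
    and "\<forall>t\<in>{1..N+1}. has_transfer_exponent H (P t) D (\<rho> t) C"
    and "bij_betw \<sigma> {1..N+1} {1..N+1}"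
    and "\<forall>s\<in>{1..N+1}. \<forall>t\<in>{1..N+1}. s \<le> t \<longrightarrow> \<rho> (\<sigma> s) \<le> \<rho> (\<sigma> t)"
  shows "measure_pmf.prob (Pi_pmf {1..N+1} 1 (\<lambda>_. pmf_of_set {1..m}))
           {i. \<exists>\<pi>. bij_betw \<pi> {1..N+1} {1..N+1}
                   \<and> (\<forall>t\<in>{1..N+1}. i (\<pi> t) \<le> t)
                   \<and> (\<forall>t\<in>{1..N+1}. has_transfer_exponent H (P (\<sigma> (i (\<pi> t)))) D (\<rho> (\<sigma> t)) C)}
         \<ge> 0.97"
proof -
  let ?M = "Pi_pmf {1..N+1} (1::nat) (\<lambda>_. pmf_of_set {1..m})"
  define B where "B = (\<Union>t\<in>{1..m}. {i::nat \<Rightarrow> nat. card {s\<in>{1..N+1}. i s \<le> t} < t})"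
  have m: "1 \<le> m" "10 * m \<le> N + 1"
    using assms(1,2) by auto
  then have "measure_pmf.prob ?M B \<le> 1 - 0.97"
    using prob_Pi_pmf_ex_card_le_less[of "{1..N+1}" m 1] by (simp add: B_def)
  then show ?thesis
  proof (rule measure_pmf_prob_ge_if_exceptions_le, goal_cases)
    case (1 i)
    have labels: "\<forall>s\<in>{1..N+1}. i s \<in> {1..m}"
      using 1 m by (auto simp: set_Pi_pmf PiE_dflt_def)
    then obtain \<pi> where \<pi>: "bij_betw \<pi> {1..N+1} {1..N+1}" "\<forall>t\<in>{1..N+1}. i (\<pi> t) \<le> t"
      using ex_bij_betw_atLeastAtMost_label_le[of "N + 1" i m] 1 m by (auto simp: B_def not_less)
    have "\<forall>t\<in>{1..N+1}. has_transfer_exponent H (P (\<sigma> (i (\<pi> t)))) D (\<rho> (\<sigma> t)) C"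
    proof
      fix t assume t: "t \<in> {1..N+1}"
      have "i (\<pi> t) \<in> {1..N+1}"
        using labels bij_betw_apply[OF \<pi>(1) t] \<pi>(2) t by fastforce
      then show "has_transfer_exponent H (P (\<sigma> (i (\<pi> t)))) D (\<rho> (\<sigma> t)) C"
        using has_transfer_exponent_sorted[OF _ assms(5-8)] assms(3) \<pi>(2) t by simp
    qed
    with \<pi> show ?case
      by blast
  qed
qed

end
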